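(* Let $\sigma\in\mathbb{C}$ with $\operatorname{Re}\sigma>0$, let $\sqrt\sigma$ be the principal square root, ${\bf L}={\bf I}+(\sigma-1){\bf A}$, $c=\sqrt\sigma$, and $u=(\sqrt\sigma-1)/(\sqrt\sigma+1)$. Then ${\bf L}+c{\bf I}$ is invertible, $|u|<1$, and ${\bf K}=({\bf L}-c{\bf I})({\bf L}+c{\bf I})^{-1}$ satisfies $\|{\bf K}\|\le|u|$. Consequently, with $\Upsilon={\bf I}-2\Gamma$, $\|\Upsilon{\bf K}\|\le|u|$ and $$[-c{\bf I}+\Gamma({\bf L}+c{\bf I})]^{-1}=-2({\bf L}+c{\bf I})^{-1}\sum_{n=0}^\infty(\Upsilon{\bf K})^n\,\Upsilon,$$ the series converging in operator norm with rate of convergence at most $|u|$.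
   Context: ${\cal H}$ is a complex Hilbert space, $\Gamma$ is an orthogonal projection on ${\cal H}$, and ${\bf A}:{\cal H}\to{\cal H}$ is bounded Hermitian with $0\le{\bf A}\le{\bf I}$. For a series $\sum_n\alpha^n{\bf C}_n$ the rate of convergence is $|\alpha|\limsup_n\|{\bf C}_n\|^{1/n}$. *)

theory Defs
  imports "HOL-Analysis.Analysis" "HOL-Library.Liminf_Limsup"
begin

text \<open>The inner product is linear in the first and conjugate-linear in the second argument.\<close>

class complex_hilbert = banach +
  fixes scaleC :: "complex \<Rightarrow> 'a \<Rightarrow> 'a"
    and cinner :: "'a \<Rightarrow> 'a \<Rightarrow> complex"
  assumes scaleC_of_real: "scaleC (complex_of_real r) x = scaleR r x"
    and scaleC_add_right: "scaleC a (x + y) = scaleC a x + scaleC a y"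
    and scaleC_add_left: "scaleC (a + b) x = scaleC a x + scaleC b x"
    and scaleC_scaleC: "scaleC a (scaleC b x) = scaleC (a * b) x"
    and cinner_add_left: "cinner (x + y) z = cinner x z + cinner y z"
    and cinner_scaleC_left: "cinner (scaleC a x) y = a * cinner x y"
    and cinner_commute: "cinner y x = cnj (cinner x y)"
    and cinner_norm: "cinner x x = complex_of_real ((norm x)\<^sup>2)"

text \<open>Bounded (complex-linear) operators on H are the complex-linear elements of the blinfun type;
 the norm of the blinfun type is the operator norm.\<close>

definition clinear_op :: "('a::complex_hilbert \<Rightarrow>\<^sub>L 'a) \<Rightarrow> bool" where
  "clinear_op T \<longleftrightarrow> (\<forall>c x. blinfun_apply T (scaleC c x) = scaleC c (blinfun_apply T x))"

definition hermitian_op :: "('a::complex_hilbert \<Rightarrow>\<^sub>L 'a) \<Rightarrow> bool" where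
  "hermitian_op T \<longleftrightarrow> clinear_op T \<and>
     (\<forall>x y. cinner (blinfun_apply T x) y = cinner x (blinfun_apply T y))"

definition orth_proj :: "('a::complex_hilbert \<Rightarrow>\<^sub>L 'a) \<Rightarrow> bool" where
  "orth_proj P \<longleftrightarrow> hermitian_op P \<and> P o\<^sub>L P = P"

definition cscale_op :: "complex \<Rightarrow> ('a::complex_hilbert \<Rightarrow>\<^sub>L 'a) \<Rightarrow> ('a \<Rightarrow>\<^sub>L 'a)" where
  "cscale_op c T = Blinfun (\<lambda>x. scaleC c (blinfun_apply T x))"

definition invertible_op :: "('a::complex_hilbert \<Rightarrow>\<^sub>L 'a) \<Rightarrow> bool" where
  "invertible_op T \<longleftrightarrow> (\<exists>S. clinear_op S \<and> S o\<^sub>L T = id_blinfun \<and> T o\<^sub>L S = id_blinfun)"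

definition inv_op :: "('a::complex_hilbert \<Rightarrow>\<^sub>L 'a) \<Rightarrow> ('a \<Rightarrow>\<^sub>L 'a)" where
  "inv_op T = (THE S. S o\<^sub>L T = id_blinfun \<and> T o\<^sub>L S = id_blinfun)"

definition opow :: "('a::real_normed_vector \<Rightarrow>\<^sub>L 'a) \<Rightarrow> nat \<Rightarrow> ('a \<Rightarrow>\<^sub>L 'a)" where
  "opow T n = ((\<lambda>S. T o\<^sub>L S) ^^ n) id_blinfun"

definition conv_rate :: "(nat \<Rightarrow> 'b::real_normed_vector) \<Rightarrow> ereal" where
  "conv_rate C = limsup (\<lambda>n. ereal (root n (norm (C n))))"

end

theory Submission
  imports Defs
begin

text \<open>Write \<open>T = L + c I = (1 + c) I + (\<sigma> - 1) A\<close>. For \<open>0 \<le> A \<le> I\<close> the squared norm of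
  \<open>(p I + q A) x\<close> is a combination of \<open>|p|\<^sup>2\<close> and \<open>|p + q|\<^sup>2\<close> with weights \<open>\<langle>(I - A) x, x\<rangle>\<close>
  and \<open>\<langle>A x, x\<rangle>\<close>, plus the nonpositive term \<open>|q|\<^sup>2 \<langle>(A\<^sup>2 - A) x, x\<rangle>\<close>; so operators of this
  form are controlled by the two scalars \<open>p\<close> and \<open>p + q\<close>, i.e. by the spectrum of \<open>A\<close> in \<open>[0,1]\<close>.
  Hence \<open>T\<close> is invertible (a Neumann series around a large real multiple of \<open>I\<close>), and
  \<open>\<parallel>(L - c I) x\<parallel> \<le> |u| \<parallel>T x\<parallel>\<close> because \<open>|1 - c| = |u| |1 + c|\<close> and \<open>|\<sigma> - c| = |u| |\<sigma> + c|\<close>,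
  which gives \<open>\<parallel>K\<parallel> \<le> |u|\<close>. The reflection \<open>\<Upsilon>\<close> is an isometric involution, and
  \<open>-c I + \<Gamma> T = -(1/2) \<Upsilon> (I - \<Upsilon> K) T\<close> since \<open>K T = T - 2 c I\<close>; inverting the three factors,
  the middle one by a Neumann series, yields the formula and the rate.\<close>

lemma scaleC_one [simp]: "scaleC 1 (x::'a::complex_hilbert) = x"
  using scaleC_of_real[of 1 x] by simp

lemma scaleC_zero_left [simp]: "scaleC 0 (x::'a::complex_hilbert) = 0"
  using scaleC_of_real[of 0 x] by simp

lemma scaleC_zero_right [simp]: "scaleC a (0::'a::complex_hilbert) = 0"
  using scaleC_add_right[of a 0 0] by simp

lemma scaleC_minus_right: "scaleC a (- x) = - scaleC a (x::'a::complex_hilbert)"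
  using scaleC_add_right[of a x "-x"] by (simp add: eq_neg_iff_add_eq_0 add.commute)

lemma scaleC_diff_right: "scaleC a (x - y) = scaleC a x - scaleC a (y::'a::complex_hilbert)"
  using scaleC_add_right[of a x "-y"] by (simp add: scaleC_minus_right)

lemma scaleC_minus_left: "scaleC (- a) (x::'a::complex_hilbert) = - scaleC a x"
  using scaleC_add_left[of a "-a" x] by (simp add: eq_neg_iff_add_eq_0 add.commute)

lemma scaleC_diff_left: "scaleC (a - b) (x::'a::complex_hilbert) = scaleC a x - scaleC b x"
  using scaleC_add_left[of a "-b" x] by (simp add: scaleC_minus_left)

lemma scaleR_eq_scaleC: "scaleR r (x::'a::complex_hilbert) = scaleC (complex_of_real r) x"
  by (simp add: scaleC_of_real)

lemma scaleC_scaleR_right: "scaleC a (scaleR r x) = scaleR r (scaleC a (x::'a::complex_hilbert))"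
  by (metis scaleC_of_real scaleC_scaleC mult.commute)

lemma cinner_add_right: "cinner z (x + y) = cinner z x + cinner z (y::'a::complex_hilbert)"
  by (metis cinner_commute cinner_add_left complex_cnj_add)

lemma cinner_scaleC_right: "cinner x (scaleC a y) = cnj a * cinner x (y::'a::complex_hilbert)"
  by (metis cinner_commute cinner_scaleC_left complex_cnj_mult)

lemma cinner_minus_left: "cinner (- x) y = - cinner x (y::'a::complex_hilbert)"
  using cinner_add_left[of x "-x" y] cinner_add_left[of 0 0 y]
  by (simp add: eq_neg_iff_add_eq_0 add.commute)

lemma cinner_diff_left: "cinner (x - y) z = cinner x z - cinner y (z::'a::complex_hilbert)"
  using cinner_add_left[of x "-y" z] by (simp add: cinner_minus_left)

lemma cinner_diff_right: "cinner z (x - y) = cinner z x - cinner z (y::'a::complex_hilbert)"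
  by (metis cinner_commute cinner_diff_left complex_cnj_diff)

lemma norm_sq_eq_Re_cinner: "(norm x)\<^sup>2 = Re (cinner x (x::'a::complex_hilbert))"
  by (simp add: cinner_norm)

lemma norm_scaleC: "norm (scaleC a x) = cmod a * norm (x::'a::complex_hilbert)"
proof -
  have "(norm (scaleC a x))\<^sup>2 = (cmod a * norm x)\<^sup>2"
    unfolding norm_sq_eq_Re_cinner cinner_scaleC_left cinner_scaleC_right
    using cmod_power2[of a]
    by (simp add: cinner_norm power_mult_distrib complex_mult_cnj del: of_real_power)
      (simp add: power2_eq_square algebra_simps)
  then show ?thesis by (simp add: power2_eq_iff_nonneg)
qed

lemma bounded_linear_scaleC: "bounded_linear (scaleC a :: 'a::complex_hilbert \<Rightarrow> 'a)"
  by (rule bounded_linear_intro[where K="cmod a"])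
    (auto simp: scaleC_add_right scaleC_scaleR_right norm_scaleC)

lemma cscale_op_apply [simp]: "blinfun_apply (cscale_op c T) x = scaleC c (T x)"
  unfolding cscale_op_def
  by (subst bounded_linear_Blinfun_apply)
    (auto intro: bounded_linear_compose[OF bounded_linear_scaleC blinfun.bounded_linear_right,
        unfolded o_def])

lemma clinear_op_id [simp]: "clinear_op id_blinfun"
  by (simp add: clinear_op_def)

lemma clinear_op_add: "clinear_op S \<Longrightarrow> clinear_op T \<Longrightarrow> clinear_op (S + T)"
  by (simp add: clinear_op_def blinfun.add_left scaleC_add_right)

lemma clinear_op_diff: "clinear_op S \<Longrightarrow> clinear_op T \<Longrightarrow> clinear_op (S - T)"
  by (simp add: clinear_op_def blinfun.diff_left scaleC_diff_right)

lemma clinear_op_scaleR: "clinear_op S \<Longrightarrow> clinear_op (r *\<^sub>R S)"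
  by (simp add: clinear_op_def scaleC_scaleR_right blinfun.scaleR_left)

lemma clinear_op_compose: "clinear_op S \<Longrightarrow> clinear_op T \<Longrightarrow> clinear_op (S o\<^sub>L T)"
  by (simp add: clinear_op_def)

lemma clinear_op_cscale: "clinear_op T \<Longrightarrow> clinear_op (cscale_op c T)"
  by (simp add: clinear_op_def scaleC_scaleC mult.commute)

lemma blinfun_compose_eq_id_apply:
  "S o\<^sub>L T = id_blinfun \<Longrightarrow> S (T x) = x"
  by (metis blinfun_apply_blinfun_compose blinfun_apply_id_blinfun id_apply)

lemma clinear_op_inverse:
  assumes "clinear_op T" "S o\<^sub>L T = id_blinfun" "T o\<^sub>L S = id_blinfun"
  shows "clinear_op S"
  unfolding clinear_op_def
proof (intro allI)
  fix c x
  have "S (scaleC c x) = S (scaleC c (T (S x)))"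
    using assms(3) by (simp add: blinfun_compose_eq_id_apply)
  also have "\<dots> = S (T (scaleC c (S x)))"
    using assms(1) by (simp add: clinear_op_def)
  also have "\<dots> = scaleC c (S x)"
    using assms(2) by (simp add: blinfun_compose_eq_id_apply)
  finally show "S (scaleC c x) = scaleC c (S x)" .
qed

lemma inv_op_eqI:
  fixes S T :: "'a::complex_hilbert \<Rightarrow>\<^sub>L 'a"
  assumes "S o\<^sub>L T = id_blinfun" "T o\<^sub>L S = id_blinfun"
  shows "inv_op T = S"
  unfolding inv_op_def
proof (rule the_equality)
  show "S o\<^sub>L T = id_blinfun \<and> T o\<^sub>L S = id_blinfun"
    using assms by simp
next
  fix S' assume S': "S' o\<^sub>L T = id_blinfun \<and> T o\<^sub>L S' = id_blinfun"
  show "S' = S"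
  proof (rule blinfun_eqI)
    fix x
    have "S' x = S' (T (S x))"
      using assms(2) by (simp add: blinfun_compose_eq_id_apply)
    also have "\<dots> = S x"
      using S' by (simp add: blinfun_compose_eq_id_apply)
    finally show "S' x = S x" .
  qed
qed

lemma invertible_opI:
  assumes "clinear_op T" "S o\<^sub>L T = id_blinfun" "T o\<^sub>L S = id_blinfun"
  shows "invertible_op T"
  unfolding invertible_op_def using assms clinear_op_inverse by blast

lemma invertible_opD:
  assumes "invertible_op T"
  shows "inv_op T o\<^sub>L T = id_blinfun" "T o\<^sub>L inv_op T = id_blinfun"
    and "clinear_op (inv_op T)" "clinear_op T"
proof -
  obtain S where S: "clinear_op S" "S o\<^sub>L T = id_blinfun" "T o\<^sub>L S = id_blinfun"
    using assms unfolding invertible_op_def by blast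
  moreover have "inv_op T = S"
    using S by (intro inv_op_eqI)
  ultimately show "inv_op T o\<^sub>L T = id_blinfun" "T o\<^sub>L inv_op T = id_blinfun"
    "clinear_op (inv_op T)" "clinear_op T"
    using clinear_op_inverse[of S T] by simp_all
qed

lemma invertible_op_compose:
  assumes "invertible_op S" "invertible_op T"
  shows "invertible_op (S o\<^sub>L T)" "inv_op (S o\<^sub>L T) = inv_op T o\<^sub>L inv_op S"
proof -
  note S = invertible_opD[OF assms(1)] and T = invertible_opD[OF assms(2)]
  have left: "(inv_op T o\<^sub>L inv_op S) o\<^sub>L (S o\<^sub>L T) = id_blinfun"
    using S(1) T(1) by (intro blinfun_eqI) (simp add: blinfun_compose_eq_id_apply)
  have right: "(S o\<^sub>L T) o\<^sub>L (inv_op T o\<^sub>L inv_op S) = id_blinfun"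
    using S(2) T(2) by (intro blinfun_eqI) (simp add: blinfun_compose_eq_id_apply)
  show "invertible_op (S o\<^sub>L T)"
    using left right S(4) T(4) by (intro invertible_opI clinear_op_compose)
  show "inv_op (S o\<^sub>L T) = inv_op T o\<^sub>L inv_op S"
    using left right by (rule inv_op_eqI)
qed

lemma invertible_op_scaleR:
  assumes "invertible_op T" "r \<noteq> 0"
  shows "invertible_op (r *\<^sub>R T)" "inv_op (r *\<^sub>R T) = inverse r *\<^sub>R inv_op T"
proof -
  note T = invertible_opD[OF assms(1)]
  have left: "(inverse r *\<^sub>R inv_op T) o\<^sub>L (r *\<^sub>R T) = id_blinfun"
    using T(1) assms(2)
    by (intro blinfun_eqI)
      (simp add: blinfun.scaleR_left blinfun.scaleR_right blinfun_compose_eq_id_apply)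
  have right: "(r *\<^sub>R T) o\<^sub>L (inverse r *\<^sub>R inv_op T) = id_blinfun"
    using T(2) assms(2)
    by (intro blinfun_eqI)
      (simp add: blinfun.scaleR_left blinfun.scaleR_right blinfun_compose_eq_id_apply)
  show "invertible_op (r *\<^sub>R T)"
    using left right T(4) by (intro invertible_opI clinear_op_scaleR)
  show "inv_op (r *\<^sub>R T) = inverse r *\<^sub>R inv_op T"
    using left right by (rule inv_op_eqI)
qed

lemma opow_0 [simp]: "opow T 0 = id_blinfun"
  by (simp add: opow_def)

lemma opow_Suc: "opow T (Suc n) = T o\<^sub>L opow T n"
  by (simp add: opow_def)

lemma opow_Suc': "opow T (Suc n) = opow T n o\<^sub>L T"
proof (induction n)
  case 0
  show ?case by (auto simp: opow_Suc intro: blinfun_eqI)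
next
  case (Suc n)
  have "opow T (Suc (Suc n)) = T o\<^sub>L (opow T n o\<^sub>L T)"
    using Suc by (simp add: opow_Suc)
  also have "\<dots> = opow T (Suc n) o\<^sub>L T"
    by (auto simp: opow_Suc intro: blinfun_eqI)
  finally show ?case .
qed

lemma norm_opow_le: "norm (opow T n) \<le> norm T ^ n"
proof (induction n)
  case 0
  show ?case by (simp add: norm_blinfun_id_le)
next
  case (Suc n)
  have "norm (opow T (Suc n)) \<le> norm T * norm (opow T n)"
    unfolding opow_Suc by (rule norm_blinfun_compose)
  also have "\<dots> \<le> norm T * norm T ^ n"
    using Suc by (simp add: mult_left_mono)
  finally show ?case by simp
qed

lemma neumann_series:
  fixes T :: "'a::banach \<Rightarrow>\<^sub>L 'a"
  assumes "norm T < 1"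
  shows "summable (opow T)"
    and "(id_blinfun - T) o\<^sub>L (\<Sum>n. opow T n) = id_blinfun"
    and "(\<Sum>n. opow T n) o\<^sub>L (id_blinfun - T) = id_blinfun"
proof -
  show summable: "summable (opow T)"
    by (rule summable_comparison_test[OF _ summable_geometric[of "norm T"]])
      (use assms norm_opow_le in auto)
  have "opow T \<longlonglongrightarrow> 0"
  proof (rule tendsto_norm_zero_cancel, rule Lim_null_comparison)
    show "\<forall>\<^sub>F n in sequentially. norm (norm (opow T n)) \<le> norm T ^ n"
      by (simp add: always_eventually norm_opow_le)
    show "(\<lambda>n. norm T ^ n) \<longlonglongrightarrow> 0"
      using assms by (simp add: LIMSEQ_power_zero)
  qed
  then have telescope: "(\<lambda>n. opow T n - opow T (Suc n)) sums id_blinfun"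
    using telescope_sums' by fastforce
  have "(id_blinfun - T) o\<^sub>L opow T n = opow T n - opow T (Suc n)" for n
    by (auto simp: opow_Suc blinfun.bilinear_simps intro!: blinfun_eqI)
  moreover note bounded_linear.suminf[OF bounded_bilinear.bounded_linear_right
      [OF bounded_bilinear_blinfun_compose, of "id_blinfun - T"] summable]
  ultimately show "(id_blinfun - T) o\<^sub>L (\<Sum>n. opow T n) = id_blinfun"
    using telescope by (simp add: sums_iff)
  have "opow T n o\<^sub>L (id_blinfun - T) = opow T n - opow T (Suc n)" for n
    by (auto simp: opow_Suc' blinfun.bilinear_simps intro!: blinfun_eqI)
  moreover note bounded_linear.suminf[OF bounded_bilinear.bounded_linear_left
      [OF bounded_bilinear_blinfun_compose, of "id_blinfun - T"] summable]
  ultimately show "(\<Sum>n. opow T n) o\<^sub>L (id_blinfun - T) = id_blinfun"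
    using telescope by (simp add: sums_iff)
qed

lemma invertible_op_id_minus:
  fixes T :: "'a::complex_hilbert \<Rightarrow>\<^sub>L 'a"
  assumes "clinear_op T" "norm T < 1"
  shows "invertible_op (id_blinfun - T)" "inv_op (id_blinfun - T) = (\<Sum>n. opow T n)"
  using invertible_opI[OF clinear_op_diff[OF clinear_op_id assms(1)]]
    inv_op_eqI neumann_series(2,3)[OF assms(2)]
  by blast+

definition positive_contraction :: "('a::complex_hilbert \<Rightarrow>\<^sub>L 'a) \<Rightarrow> bool" where
  "positive_contraction A \<longleftrightarrow> hermitian_op A
     \<and> (\<forall>x. 0 \<le> Re (cinner (A x) x)) \<and> (\<forall>x. Re (cinner (A x) x) \<le> Re (cinner x x))"

definition pencil_op :: "complex \<Rightarrow> complex \<Rightarrow> ('a::complex_hilbert \<Rightarrow>\<^sub>L 'a) \<Rightarrow> ('a \<Rightarrow>\<^sub>L 'a)" where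
  "pencil_op p q A = cscale_op p id_blinfun + cscale_op q A"

lemma pencil_op_apply: "pencil_op p q A x = scaleC p x + scaleC q (A x)"
  by (simp add: pencil_op_def blinfun.add_left)

lemma clinear_op_pencil_op: "clinear_op A \<Longrightarrow> clinear_op (pencil_op p q A)"
  unfolding pencil_op_def by (intro clinear_op_add clinear_op_cscale clinear_op_id)

lemma hermitian_op_cinner_real:
  assumes "hermitian_op A"
  shows "cinner (A x) x = of_real (Re (cinner (A x) x))"
    and "cinner x (A x) = of_real (Re (cinner (A x) x))"
proof -
  have sym: "cinner x (A x) = cinner (A x) x"
    using assms by (simp add: hermitian_op_def)
  then have "Im (cinner (A x) x) = Im (cnj (cinner (A x) x))"
    using cinner_commute[of x "A x"] by simp
  then show "cinner (A x) x = of_real (Re (cinner (A x) x))"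
    by (simp add: complex_eq_iff)
  then show "cinner x (A x) = of_real (Re (cinner (A x) x))"
    using sym by simp
qed

lemma norm_pencil_sq:
  assumes "hermitian_op A"
  shows "(norm (scaleC p x + scaleC q (A x)))\<^sup>2 =
     (cmod p)\<^sup>2 * ((norm x)\<^sup>2 - Re (cinner (A x) x)) + (cmod (p + q))\<^sup>2 * Re (cinner (A x) x)
     + (cmod q)\<^sup>2 * ((norm (A x))\<^sup>2 - Re (cinner (A x) x))"
proof -
  define a where "a = Re (cinner (A x) x)"
  have real: "cinner (A x) x = of_real a" "cinner x (A x) = of_real a"
    unfolding a_def by (rule hermitian_op_cinner_real[OF assms])+
  have norms: "cinner x x = of_real ((norm x)\<^sup>2)" "cinner (A x) (A x) = of_real ((norm (A x))\<^sup>2)"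
    by (simp_all add: cinner_norm)
  have "(norm (scaleC p x + scaleC q (A x)))\<^sup>2 =
     Re (p * cnj p * of_real ((norm x)\<^sup>2) + p * cnj q * of_real a + q * cnj p * of_real a
         + q * cnj q * of_real ((norm (A x))\<^sup>2))"
    unfolding norm_sq_eq_Re_cinner[of "scaleC p x + scaleC q (A x)"] cinner_add_left
      cinner_add_right cinner_scaleC_left cinner_scaleC_right real norms
    by (simp add: algebra_simps)
  also have "\<dots> = (cmod p)\<^sup>2 * ((norm x)\<^sup>2 - a) + (cmod (p + q))\<^sup>2 * a
      + (cmod q)\<^sup>2 * ((norm (A x))\<^sup>2 - a)"
    using cmod_power2[of p] cmod_power2[of q] cmod_power2[of "p + q"]
    by (simp add: power2_eq_square algebra_simps)
  finally show ?thesis by (simp add: a_def)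
qed

text \<open>This is \<open>A\<^sup>2 \<le> A\<close>, from \<open>\<langle>A (x - A x), x - A x\<rangle> \<ge> 0\<close> and \<open>\<langle>A (A x), A x\<rangle> \<le> \<parallel>A x\<parallel>\<^sup>2\<close>.\<close>
lemma positive_contraction_norm_sq_le:
  assumes "positive_contraction A"
  shows "(norm (A x))\<^sup>2 \<le> Re (cinner (A x) x)"
proof -
  have herm: "hermitian_op A" and pos: "\<And>y. 0 \<le> Re (cinner (A y) y)"
    and le: "\<And>y. Re (cinner (A y) y) \<le> Re (cinner y y)"
    using assms by (auto simp: positive_contraction_def)
  have sym: "cinner (A (A x)) x = cinner (A x) (A x)"
    using herm by (simp add: hermitian_op_def)
  have "0 \<le> Re (cinner (A (x - A x)) (x - A x))"
    by (rule pos)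
  also have "\<dots> = Re (cinner (A x) x) - 2 * Re (cinner (A x) (A x)) + Re (cinner (A (A x)) (A x))"
    by (simp add: blinfun.diff_right cinner_diff_left cinner_diff_right sym)
  also have "Re (cinner (A (A x)) (A x)) \<le> Re (cinner (A x) (A x))"
    by (rule le)
  finally show ?thesis by (simp add: norm_sq_eq_Re_cinner)
qed

lemma norm_pencil_le:
  assumes A: "positive_contraction A"
    and m: "cmod p \<le> m" "cmod (p + q) \<le> m"
  shows "norm (scaleC p x + scaleC q (A x)) \<le> m * norm x"
proof -
  define a where "a = Re (cinner (A x) x)"
  have a: "0 \<le> a" "a \<le> (norm x)\<^sup>2" "(norm (A x))\<^sup>2 \<le> a"
    using A positive_contraction_norm_sq_le[OF A, of x]
    by (auto simp: a_def positive_contraction_def norm_sq_eq_Re_cinner)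
  have m2: "(cmod p)\<^sup>2 \<le> m\<^sup>2" "(cmod (p + q))\<^sup>2 \<le> m\<^sup>2"
    using m by (auto intro: power_mono)
  have "(norm (scaleC p x + scaleC q (A x)))\<^sup>2 =
     (cmod p)\<^sup>2 * ((norm x)\<^sup>2 - a) + (cmod (p + q))\<^sup>2 * a + (cmod q)\<^sup>2 * ((norm (A x))\<^sup>2 - a)"
    unfolding a_def using A by (simp add: norm_pencil_sq positive_contraction_def)
  also have "\<dots> \<le> m\<^sup>2 * ((norm x)\<^sup>2 - a) + m\<^sup>2 * a + 0"
    using a m2 by (intro add_mono mult_right_mono mult_nonneg_nonpos) auto
  also have "\<dots> = (m * norm x)\<^sup>2"
    by (simp add: algebra_simps power_mult_distrib)
  finally have "(norm (scaleC p x + scaleC q (A x)))\<^sup>2 \<le> (m * norm x)\<^sup>2" .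
  moreover have "0 \<le> m * norm x"
    using m(1) norm_ge_zero[of p] by (meson mult_nonneg_nonneg norm_ge_zero order_trans)
  ultimately show ?thesis
    by (rule power2_le_imp_le)
qed

lemma norm_pencil_le_ratio:
  assumes A: "positive_contraction A"
    and r: "0 \<le> r" "r \<le> 1"
    and ratio: "cmod p1 = r * cmod p2" "cmod (p1 + q) = r * cmod (p2 + q)"
  shows "norm (scaleC p1 x + scaleC q (A x)) \<le> r * norm (scaleC p2 x + scaleC q (A x))"
proof -
  define a where "a = Re (cinner (A x) x)"
  define P where "P = (cmod p2)\<^sup>2 * ((norm x)\<^sup>2 - a) + (cmod (p2 + q))\<^sup>2 * a"
  define Q where "Q = (cmod q)\<^sup>2 * ((norm (A x))\<^sup>2 - a)"
  have herm: "hermitian_op A"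
    using A by (simp add: positive_contraction_def)
  have "(norm (A x))\<^sup>2 - a \<le> 0"
    using positive_contraction_norm_sq_le[OF A, of x] by (simp add: a_def)
  then have Q: "Q \<le> 0"
    unfolding Q_def by (simp add: mult_nonneg_nonpos)
  have "(norm (scaleC p1 x + scaleC q (A x)))\<^sup>2 = r\<^sup>2 * P + Q"
    unfolding norm_pencil_sq[OF herm] a_def[symmetric] P_def Q_def ratio
    by (simp add: algebra_simps power_mult_distrib)
  also have "\<dots> \<le> r\<^sup>2 * P + r\<^sup>2 * Q"
  proof -
    have "0 \<le> 1 - r\<^sup>2"
      using r by (simp add: power_le_one)
    then have "(1 - r\<^sup>2) * Q \<le> 0"
      using Q by (rule mult_nonneg_nonpos)
    then show ?thesis by (simp add: algebra_simps)
  qed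
  also have "\<dots> = (r * norm (scaleC p2 x + scaleC q (A x)))\<^sup>2"
    unfolding power_mult_distrib norm_pencil_sq[OF herm] a_def[symmetric] P_def Q_def
    by (simp add: algebra_simps power_mult_distrib)
  finally show ?thesis
    by (rule power2_le_imp_le) (use r in simp)
qed

lemma Re_csqrt_pos:
  assumes "0 < Re z"
  shows "0 < Re (csqrt z)"
proof (rule ccontr)
  assume "\<not> 0 < Re (csqrt z)"
  then have "Re (csqrt z) = 0"
    using Re_csqrt[of z] by linarith
  then have "Re z = - (Im (csqrt z))\<^sup>2"
    using Re_power2[of "csqrt z"] by (simp add: power2_csqrt)
  then show False
    using assms zero_le_power2[of "Im (csqrt z)"] by linarith
qed

lemma norm_Cayley_lt_1:
  assumes "0 < Re c"
  shows "cmod ((c - 1) / (c + 1)) < 1"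
proof -
  have "(cmod (c - 1))\<^sup>2 < (cmod (c + 1))\<^sup>2"
    using assms unfolding cmod_power2 by (simp add: power2_eq_square algebra_simps)
  then have "cmod (c - 1) < cmod (c + 1)"
    by (simp add: power2_less_imp_less)
  moreover have "0 < cmod (c + 1)"
    using assms by (auto simp: complex_eq_iff)
  ultimately show ?thesis
    by (simp add: norm_divide)
qed

lemma norm_of_real_minus_lt:
  assumes "0 < Re w" "(cmod w)\<^sup>2 / Re w < R"
  shows "cmod (of_real R - w) < R"
proof -
  have "0 < R"
    using assms divide_nonneg_pos[OF zero_le_power2[of "cmod w"] assms(1)] by linarith
  have "(cmod (of_real R - w))\<^sup>2 = R\<^sup>2 - 2 * R * Re w + (cmod w)\<^sup>2"
    unfolding cmod_power2 by (simp add: power2_eq_square algebra_simps)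
  also have "\<dots> < R\<^sup>2"
    using assms mult_pos_pos[OF \<open>0 < R\<close> assms(1)] by (simp add: pos_divide_less_eq)
  finally show ?thesis
    using \<open>0 < R\<close> by (simp add: power2_less_imp_less)
qed

text \<open>Neumann series around a large real multiple \<open>R I\<close>: the scalars \<open>1 - p / R\<close> and
  \<open>1 - (p + q) / R\<close> lie in the unit disc once \<open>R\<close> is large.\<close>
lemma invertible_pencil_op:
  assumes A: "positive_contraction A"
    and pq: "0 < Re p" "0 < Re (p + q)"
  shows "invertible_op (pencil_op p q A)"
proof -
  define R where "R = (cmod p)\<^sup>2 / Re p + (cmod (p + q))\<^sup>2 / Re (p + q) + 1"
  have nonneg: "0 \<le> (cmod p)\<^sup>2 / Re p" "0 \<le> (cmod (p + q))\<^sup>2 / Re (p + q)"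
    using pq by simp_all
  have "(cmod p)\<^sup>2 / Re p < R" "(cmod (p + q))\<^sup>2 / Re (p + q) < R"
    using nonneg by (simp_all add: R_def)
  then have R: "cmod (of_real R - p) < R" "cmod (of_real R - (p + q)) < R"
    using pq by (simp_all add: norm_of_real_minus_lt)
  then have "0 < R"
    using norm_ge_zero[of "of_real R - p"] by linarith
  define N where "N = id_blinfun - (1 / R) *\<^sub>R pencil_op p q A"
  have clinear_A: "clinear_op A"
    using A by (simp add: positive_contraction_def hermitian_op_def)
  have N_apply: "N x = scaleC (1 - p / of_real R) x + scaleC (- q / of_real R) (A x)" for x
    using \<open>0 < R\<close>
    by (simp add: N_def pencil_op_apply blinfun.diff_left blinfun.scaleR_left scaleR_eq_scaleC
        scaleC_add_right scaleC_scaleC scaleC_diff_left scaleC_minus_left)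
  have small: "cmod (1 - p / of_real R) < 1" "cmod (1 - p / of_real R + - q / of_real R) < 1"
  proof -
    have "1 - p / of_real R = (of_real R - p) / of_real R"
      "1 - p / of_real R + - q / of_real R = (of_real R - (p + q)) / of_real R"
      using \<open>0 < R\<close> by (simp_all add: field_simps)
    then show "cmod (1 - p / of_real R) < 1" "cmod (1 - p / of_real R + - q / of_real R) < 1"
      using R \<open>0 < R\<close> by (simp_all add: norm_divide)
  qed
  have "norm N \<le> max (cmod (1 - p / of_real R)) (cmod (1 - p / of_real R + - q / of_real R))"
    by (rule norm_blinfun_bound) (auto simp: N_apply le_max_iff_disj intro!: norm_pencil_le[OF A])
  then have "norm N < 1"
    using small by linarith
  then have "invertible_op (id_blinfun - N)"
    unfolding N_def by (intro invertible_op_id_minus clinear_op_diff clinear_op_scaleR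
        clinear_op_pencil_op clinear_A clinear_op_id)
  moreover have "pencil_op p q A = R *\<^sub>R (id_blinfun - N)"
    using \<open>0 < R\<close> by (simp add: N_def)
  ultimately show ?thesis
    using \<open>0 < R\<close> by (simp add: invertible_op_scaleR)
qed

lemma norm_pencil_op_compose_inv_le:
  assumes A: "positive_contraction A" and inv: "invertible_op (pencil_op p2 q A)"
    and r: "0 \<le> r" "r \<le> 1"
    and ratio: "cmod p1 = r * cmod p2" "cmod (p1 + q) = r * cmod (p2 + q)"
  shows "norm (pencil_op p1 q A o\<^sub>L inv_op (pencil_op p2 q A)) \<le> r"
proof (rule norm_blinfun_bound)
  fix y
  let ?x = "inv_op (pencil_op p2 q A) y"
  have "norm (pencil_op p1 q A ?x) \<le> r * norm (pencil_op p2 q A ?x)"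
    unfolding pencil_op_apply by (rule norm_pencil_le_ratio[OF A r ratio])
  then show "norm ((pencil_op p1 q A o\<^sub>L inv_op (pencil_op p2 q A)) y) \<le> r * norm y"
    using invertible_opD(2)[OF inv] by (simp add: blinfun_compose_eq_id_apply)
qed fact

lemma Cayley_norm_ratios:
  assumes "c * c = \<sigma>" "c + 1 \<noteq> 0"
  shows "cmod (1 - c) = cmod ((c - 1) / (c + 1)) * cmod (1 + c)"
    and "cmod (\<sigma> - c) = cmod ((c - 1) / (c + 1)) * cmod (\<sigma> + c)"
proof -
  have "cmod (1 - c) = cmod (c - 1)"
    by (rule norm_minus_commute)
  then show "cmod (1 - c) = cmod ((c - 1) / (c + 1)) * cmod (1 + c)"
    using assms(2) by (simp add: norm_divide add.commute)
  have "\<sigma> - c = c * (c - 1)" "\<sigma> + c = c * (c + 1)"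
    using assms(1) by (simp_all add: algebra_simps)
  then show "cmod (\<sigma> - c) = cmod ((c - 1) / (c + 1)) * cmod (\<sigma> + c)"
    using assms(2) by (simp add: norm_mult norm_divide)
qed

lemma Cayley_transform_pencil_op:
  assumes A: "positive_contraction A" and \<sigma>: "0 < Re \<sigma>" and c: "c = csqrt \<sigma>"
    and T: "T = pencil_op (1 + c) (\<sigma> - 1) A"
    and K: "K = pencil_op (1 - c) (\<sigma> - 1) A o\<^sub>L inv_op T"
  shows "invertible_op T" and "norm K \<le> cmod ((c - 1) / (c + 1))"
    and "clinear_op K" and "K o\<^sub>L T = T - 2 *\<^sub>R cscale_op c id_blinfun"
proof -
  have "0 < Re c"
    using Re_csqrt_pos[OF \<sigma>] by (simp add: c)
  have "c + 1 \<noteq> 0"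
    using \<open>0 < Re c\<close> by (auto simp: complex_eq_iff)
  have "c * c = \<sigma>"
    by (simp add: c flip: power2_eq_square)
  note ratios = Cayley_norm_ratios[OF this \<open>c + 1 \<noteq> 0\<close>]
  show T_inv: "invertible_op T"
    unfolding T using \<open>0 < Re c\<close> \<sigma> by (intro invertible_pencil_op[OF A]) simp_all
  show "norm K \<le> cmod ((c - 1) / (c + 1))"
    unfolding K T using norm_Cayley_lt_1[OF \<open>0 < Re c\<close>] T_inv[unfolded T] ratios
    by (intro norm_pencil_op_compose_inv_le[OF A]) (simp_all add: add.commute)
  have "clinear_op A"
    using A by (simp add: positive_contraction_def hermitian_op_def)
  then show "clinear_op K"
    unfolding K by (intro clinear_op_compose clinear_op_pencil_op invertible_opD(3)[OF T_inv])
  have "K o\<^sub>L T = pencil_op (1 - c) (\<sigma> - 1) A"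
    unfolding K
    by (rule blinfun_eqI) (simp add: blinfun_compose_eq_id_apply[OF invertible_opD(1)[OF T_inv]])
  also have "\<dots> = T - 2 *\<^sub>R cscale_op c id_blinfun"
    by (rule blinfun_eqI) (simp add: T pencil_op_apply blinfun.add_left blinfun.diff_left
        scaleC_add_left scaleC_diff_left scaleR_2)
  finally show "K o\<^sub>L T = T - 2 *\<^sub>R cscale_op c id_blinfun" .
qed

lemma norm_compose_opow_compose_le:
  "norm (X o\<^sub>L opow Z n o\<^sub>L Y) \<le> norm X * norm Z ^ n * norm Y"
proof -
  have "norm (X o\<^sub>L opow Z n o\<^sub>L Y) \<le> norm X * norm (opow Z n) * norm Y"
    by (meson norm_blinfun_compose order_trans mult_right_mono norm_ge_zero)
  also have "\<dots> \<le> norm X * norm Z ^ n * norm Y"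
    by (intro mult_right_mono mult_left_mono norm_opow_le) simp_all
  finally show ?thesis .
qed

lemma reflection_involutive:
  assumes "P o\<^sub>L P = P"
  shows "(id_blinfun - 2 *\<^sub>R P) o\<^sub>L (id_blinfun - 2 *\<^sub>R P) = id_blinfun"
proof (rule blinfun_eqI)
  fix x
  have "P (P x) = P x"
    using assms by (metis blinfun_apply_blinfun_compose)
  then show "((id_blinfun - 2 *\<^sub>R P) o\<^sub>L (id_blinfun - 2 *\<^sub>R P)) x = id_blinfun x"
    by (simp add: blinfun.diff_left blinfun.scaleR_left blinfun.diff_right blinfun.scaleR_right
        algebra_simps flip: scaleR_add_left)
qed

text \<open>\<open>I - 2 P\<close> is even an isometry: \<open>\<langle>P x, P x\<rangle> = \<langle>P x, x\<rangle> = \<langle>x, P x\<rangle>\<close> cancels the cross terms.\<close>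
lemma norm_reflection_le_1:
  assumes "orth_proj P"
  shows "norm (id_blinfun - 2 *\<^sub>R P) \<le> 1"
proof (rule norm_blinfun_bound)
  fix x
  have herm: "hermitian_op P" and idem: "P (P x) = P x"
    using assms by (auto simp: orth_proj_def) (metis blinfun_apply_blinfun_compose)
  have cross: "cinner x (P x) = cinner (P x) x" "cinner (P x) (P x) = cinner (P x) x"
    using herm idem by (metis hermitian_op_def)+
  have "(norm ((id_blinfun - 2 *\<^sub>R P) x))\<^sup>2 = (norm x)\<^sup>2"
    unfolding norm_sq_eq_Re_cinner
    by (simp add: blinfun.diff_left blinfun.scaleR_left cinner_diff_left cinner_diff_right
        scaleR_eq_scaleC cinner_scaleC_left cinner_scaleC_right cross)
  then show "norm ((id_blinfun - 2 *\<^sub>R P) x) \<le> 1 * norm x"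
    by (simp add: power2_eq_iff_nonneg)
qed simp

text \<open>With \<open>\<Upsilon> = I - 2 \<Gamma>\<close> and \<open>K T = T - 2 c I\<close> one has
  \<open>-c I + \<Gamma> T = -(1/2) \<Upsilon> (I - \<Upsilon> K) T\<close>, a product of three invertible factors.\<close>
lemma inv_op_neg_scale_plus_proj_compose:
  fixes \<Gamma> T K \<Upsilon> :: "'a::complex_hilbert \<Rightarrow>\<^sub>L 'a"
  assumes \<Gamma>: "clinear_op \<Gamma>" "\<Gamma> o\<^sub>L \<Gamma> = \<Gamma>"
    and \<Upsilon>: "\<Upsilon> = id_blinfun - 2 *\<^sub>R \<Gamma>"
    and T: "invertible_op T"
    and K: "clinear_op K" "K o\<^sub>L T = T - 2 *\<^sub>R cscale_op c id_blinfun"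
    and small: "norm (\<Upsilon> o\<^sub>L K) < 1"
  shows "invertible_op (- cscale_op c id_blinfun + (\<Gamma> o\<^sub>L T))"
    and "inv_op (- cscale_op c id_blinfun + (\<Gamma> o\<^sub>L T))
      = (- 2 *\<^sub>R inv_op T) o\<^sub>L (\<Sum>n. opow (\<Upsilon> o\<^sub>L K) n) o\<^sub>L \<Upsilon>"
proof -
  define Z where "Z = \<Upsilon> o\<^sub>L K"
  have \<Upsilon>\<Upsilon>: "\<Upsilon> o\<^sub>L \<Upsilon> = id_blinfun"
    unfolding \<Upsilon> using \<Gamma>(2) by (rule reflection_involutive)
  have clinear_\<Upsilon>: "clinear_op \<Upsilon>"
    unfolding \<Upsilon> by (intro clinear_op_diff clinear_op_scaleR \<Gamma>(1) clinear_op_id)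
  have inv_\<Upsilon>: "invertible_op \<Upsilon>" "inv_op \<Upsilon> = \<Upsilon>"
    using invertible_opI[OF clinear_\<Upsilon> \<Upsilon>\<Upsilon> \<Upsilon>\<Upsilon>] inv_op_eqI[OF \<Upsilon>\<Upsilon> \<Upsilon>\<Upsilon>] by simp_all
  have inv_Z: "invertible_op (id_blinfun - Z)" "inv_op (id_blinfun - Z) = (\<Sum>n. opow Z n)"
    using invertible_op_id_minus[OF clinear_op_compose[OF clinear_\<Upsilon> K(1)]] small
    by (simp_all add: Z_def)
  have KT_apply: "K (T x) = T x - 2 *\<^sub>R scaleC c x" for x
    using K(2) by (metis blinfun_apply_blinfun_compose blinfun.diff_left blinfun.scaleR_left
        cscale_op_apply blinfun_apply_id_blinfun)
  have factor: "- cscale_op c id_blinfun + (\<Gamma> o\<^sub>L T) = (- (1/2)) *\<^sub>R (\<Upsilon> o\<^sub>L ((id_blinfun - Z) o\<^sub>L T))"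
  proof (rule blinfun_eqI)
    fix x
    have "\<Upsilon> (\<Upsilon> y) = y" for y
      using \<Upsilon>\<Upsilon> by (rule blinfun_compose_eq_id_apply)
    then have "(\<Upsilon> o\<^sub>L ((id_blinfun - Z) o\<^sub>L T)) x = 2 *\<^sub>R scaleC c x - 2 *\<^sub>R \<Gamma> (T x)"
      by (simp add: Z_def blinfun.diff_left blinfun.diff_right KT_apply \<Upsilon> blinfun.scaleR_left)
    then have "((- (1/2)) *\<^sub>R (\<Upsilon> o\<^sub>L ((id_blinfun - Z) o\<^sub>L T))) x = - scaleC c x + \<Gamma> (T x)"
      by (simp only: blinfun.scaleR_left) (simp add: scaleR_diff_right)
    moreover have "(- cscale_op c id_blinfun + (\<Gamma> o\<^sub>L T)) x = - scaleC c x + \<Gamma> (T x)"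
      by (simp only: blinfun.add_left blinfun.minus_left blinfun_apply_blinfun_compose
          cscale_op_apply blinfun_apply_id_blinfun)
    ultimately show "(- cscale_op c id_blinfun + (\<Gamma> o\<^sub>L T)) x
        = ((- (1/2)) *\<^sub>R (\<Upsilon> o\<^sub>L ((id_blinfun - Z) o\<^sub>L T))) x"
      by (metis)
  qed
  note inner = invertible_op_compose[OF inv_Z(1) T]
  note outer = invertible_op_compose[OF inv_\<Upsilon>(1) inner(1)]
  have "- (1/2) \<noteq> (0::real)"
    by simp
  note scaled = invertible_op_scaleR[OF outer(1) this]
  show "invertible_op (- cscale_op c id_blinfun + (\<Gamma> o\<^sub>L T))"
    unfolding factor using scaled by simp
  show "inv_op (- cscale_op c id_blinfun + (\<Gamma> o\<^sub>L T))
      = (- 2 *\<^sub>R inv_op T) o\<^sub>L (\<Sum>n. opow (\<Upsilon> o\<^sub>L K) n) o\<^sub>L \<Upsilon>"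
    unfolding factor scaled(2) outer(2) inner(2) inv_\<Upsilon>(2) inv_Z(2)
    by (rule blinfun_eqI) (simp add: Z_def blinfun.scaleR_left blinfun.minus_left)
qed

lemma conv_rate_le_geometric:
  assumes "0 \<le> r" "\<And>n. norm (C n) \<le> B * r ^ n"
  shows "conv_rate C \<le> ereal r"
proof -
  have "0 \<le> B"
    using assms(2)[of 0] by simp (meson norm_ge_zero order_trans)
  define D where "D = B + 1"
  have "0 < D"
    using \<open>0 \<le> B\<close> by (simp add: D_def)
  have "\<forall>\<^sub>F n in sequentially. ereal (root n (norm (C n))) \<le> ereal (root n D * r)"
    using eventually_gt_at_top[of 0]
  proof eventually_elim
    case (elim n)
    have "norm (C n) \<le> D * r ^ n"
      using assms(2)[of n] assms(1) by (simp add: D_def distrib_right add_increasing2)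
    then have "root n (norm (C n)) \<le> root n (D * r ^ n)"
      using elim by (rule real_root_le_mono[rotated])
    also have "\<dots> = root n D * r"
      using elim assms(1) by (simp add: real_root_mult real_root_power_cancel)
    finally show ?case by simp
  qed
  then have "conv_rate C \<le> limsup (\<lambda>n. ereal (root n D * r))"
    unfolding conv_rate_def by (rule Limsup_mono)
  also have "\<dots> = ereal r"
    using tendsto_mult[OF LIMSEQ_root_const[OF \<open>0 < D\<close>] tendsto_const[of r]]
    by (intro lim_imp_Limsup) (simp_all add: lim_ereal)
  finally show ?thesis .
qed

theorem mainTheorem7:
  fixes A \<Gamma> :: "'a::complex_hilbert \<Rightarrow>\<^sub>L 'a" and \<sigma> c u :: complex and L K \<Upsilon> :: "'a \<Rightarrow>\<^sub>L 'a"
  assumes hA: "hermitian_op A"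
    and A_pos: "\<forall>x. 0 \<le> Re (cinner (blinfun_apply A x) x)"
    and A_le: "\<forall>x. Re (cinner (blinfun_apply A x) x) \<le> Re (cinner x x)"
    and hG: "orth_proj \<Gamma>"
    and hs: "Re \<sigma> > 0"
  assumes L_def: "L = id_blinfun + cscale_op (\<sigma> - 1) A"
    and c_def: "c = csqrt \<sigma>"
    and u_def: "u = (csqrt \<sigma> - 1) / (csqrt \<sigma> + 1)"
    and K_def: "K = (L - cscale_op c id_blinfun) o\<^sub>L inv_op (L + cscale_op c id_blinfun)"
    and Y_def: "\<Upsilon> = id_blinfun - 2 *\<^sub>R \<Gamma>"
  shows "invertible_op (L + cscale_op c id_blinfun)
    \<and> norm u < 1
    \<and> norm K \<le> norm u
    \<and> norm (\<Upsilon> o\<^sub>L K) \<le> norm u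
    \<and> invertible_op (- cscale_op c id_blinfun + (\<Gamma> o\<^sub>L (L + cscale_op c id_blinfun)))
    \<and> summable (\<lambda>n. (- 2 *\<^sub>R inv_op (L + cscale_op c id_blinfun)) o\<^sub>L opow (\<Upsilon> o\<^sub>L K) n o\<^sub>L \<Upsilon>)
    \<and> inv_op (- cscale_op c id_blinfun + (\<Gamma> o\<^sub>L (L + cscale_op c id_blinfun)))
        = (- 2 *\<^sub>R inv_op (L + cscale_op c id_blinfun))
            o\<^sub>L (\<Sum>n. opow (\<Upsilon> o\<^sub>L K) n) o\<^sub>L \<Upsilon>
    \<and> conv_rate (\<lambda>n. (- 2 *\<^sub>R inv_op (L + cscale_op c id_blinfun)) o\<^sub>L opow (\<Upsilon> o\<^sub>L K) n o\<^sub>L \<Upsilon>)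
        \<le> ereal (norm u)"
proof -
  define T where "T = L + cscale_op c id_blinfun"
  define C where "C n = (- 2 *\<^sub>R inv_op T) o\<^sub>L opow (\<Upsilon> o\<^sub>L K) n o\<^sub>L \<Upsilon>" for n
  have A: "positive_contraction A"
    using hA A_pos A_le by (simp add: positive_contraction_def)
  have pencils: "T = pencil_op (1 + c) (\<sigma> - 1) A"
      "L - cscale_op c id_blinfun = pencil_op (1 - c) (\<sigma> - 1) A"
    by (auto simp: T_def L_def pencil_op_apply blinfun.add_left blinfun.diff_left scaleC_add_left
        scaleC_diff_left intro!: blinfun_eqI)
  note Cayley = Cayley_transform_pencil_op[OF A hs c_def pencils(1)
      K_def[folded T_def, unfolded pencils(2)]]
  have u: "norm u < 1"
    using norm_Cayley_lt_1[OF Re_csqrt_pos[OF hs]] by (simp add: u_def)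
  have K_le: "norm K \<le> norm u"
    using Cayley(2) by (simp add: u_def c_def)
  have Y_le: "norm \<Upsilon> \<le> 1"
    unfolding Y_def using hG by (rule norm_reflection_le_1)
  have YK_le: "norm (\<Upsilon> o\<^sub>L K) \<le> norm u"
    using norm_blinfun_compose[of \<Upsilon> K] mult_mono[OF Y_le K_le] by simp
  have \<Gamma>: "clinear_op \<Gamma>" "\<Gamma> o\<^sub>L \<Gamma> = \<Gamma>"
    using hG by (simp_all add: orth_proj_def hermitian_op_def)
  have "norm (\<Upsilon> o\<^sub>L K) < 1"
    using YK_le u by linarith
  note M = inv_op_neg_scale_plus_proj_compose[OF \<Gamma> Y_def Cayley(1,3,4) this]
  have C_le: "norm (C n) \<le> norm (- 2 *\<^sub>R inv_op T) * norm u ^ n" for n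
  proof -
    have "norm (C n) \<le> norm (- 2 *\<^sub>R inv_op T) * norm (\<Upsilon> o\<^sub>L K) ^ n * norm \<Upsilon>"
      unfolding C_def by (rule norm_compose_opow_compose_le)
    also have "\<dots> \<le> norm (- 2 *\<^sub>R inv_op T) * norm u ^ n * 1"
      using power_mono[OF YK_le, of n] Y_le by (intro mult_mono mult_left_mono) simp_all
    finally show ?thesis by simp
  qed
  have "summable C"
    using u by (intro summable_comparison_test[OF _ summable_mult[OF summable_geometric]])
      (auto intro: C_le)
  moreover have "conv_rate C \<le> ereal (norm u)"
    by (rule conv_rate_le_geometric[OF norm_ge_zero C_le])
  ultimately show ?thesis
    unfolding T_def[symmetric] C_def[symmetric] using Cayley(1) u K_le YK_le M by blast
qed

end
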